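(* Let $(D,\dagger)$ be a division $\mathbb{Q}$-algebra with positive involution of Albert type III or IV. In type III let $\alpha^{-1}\colon(\mathbb{H}^e,t)\to(D_\mathbb{R},\dagger)$ be an isomorphism of $\mathbb{R}$-algebras with involution, where $t$ is the canonical (quaternion conjugation) involution on each factor; in type IV let $\alpha^{-1}\colon(\mathrm{M}_d(\mathbb{C})^e,t)\to(D_\mathbb{R},\dagger)$ be an isomorphism of $\mathbb{R}$-algebras with involution, where $t$ is conjugate-transpose on each factor. Let $V$ be a left $D$-vector space with a non-degenerate $(D,\dagger)$-skew-Hermitian form $\psi$, and let $v_1,\dots,v_m$ be a weakly unitary $D$-basis of $V$. Then there exist $s_1,\dots,s_m\in D_\mathbb{R}^\times$ such that the vectors $s_1^{-1}v_1,\dots,s_m^{-1}v_m$ form a weakly unitary $D_\mathbb{R}$-basis of $V_\mathbb{R}$ (with respect to the $\mathbb{R}$-linear extension of $\psi$) satisfying: in type III, $\alpha(\psi(s_j^{-1}v_j,s_j^{-1}v_j))=(i,\dots,i)\in\mathbb{H}^e$ for all $j$; in type IV, for each $j$, $\alpha(\psi(s_j^{-1}v_j,s_j^{-1}v_j))=(\varepsilon_{1j},\dots,\varepsilon_{ej})$ where each $\varepsilon_{lj}$ is a $d\times d$ diagonal matrix with diagonal entries in $\{i,-i\}$; and moreover, for all $j$, \[\lvert s_j\rvert_D\le(2ke)^{1/4}\lvert\psi(v_j,v_j)\rvert_D^{1/2},\] where $k=1$ in type III and $k=d$ in type IV.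
   Context: Type III: $D$ is a totally definite quaternion algebra over a totally real field $F$, $e=[F:\mathbb{Q}]$, $D_\mathbb{R}\cong\mathbb{H}^e$, $\dagger$ the canonical involution. Type IV: the centre $F$ is a CM field, $[F:\mathbb{Q}]=2e$, $d=\sqrt{\dim_F D}$, $D_\mathbb{R}\cong\mathrm{M}_d(\mathbb{C})^e$, and $\dagger$ restricts to complex conjugation on $F$. $D_\mathbb{R}=D\otimes_\mathbb{Q}\mathbb{R}$, $V_\mathbb{R}=V\otimes_\mathbb{Q}\mathbb{R}$, and $\lvert a\rvert_D=\sqrt{\mathrm{Trd}_{D_\mathbb{R}/\mathbb{R}}(aa^\dagger)}$. A $(D,\dagger)$-skew-Hermitian form satisfies $\psi(y,x)=-\psi(x,y)^\dagger$, $\psi(ax,by)=a\psi(x,y)b^\dagger$; non-degenerate means for every $x\ne0$ some $y$ has $\psi(x,y)\ne0$. A basis is weakly unitary if $\psi(v_i,v_j)=0$ for $i\neq j$. *)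

theory Defs
  imports "HOL-Analysis.Analysis"
begin

datatype quat = Quat (qre: real) (qi: real) (qj: real) (qk: real)

definition qzero :: quat where "qzero = Quat 0 0 0 0"
definition qone :: quat where "qone = Quat 1 0 0 0"
definition q_i :: quat where "q_i = Quat 0 1 0 0"
definition qadd :: "quat \<Rightarrow> quat \<Rightarrow> quat" where
  "qadd p q = Quat (qre p + qre q) (qi p + qi q) (qj p + qj q) (qk p + qk q)"
definition qscale :: "real \<Rightarrow> quat \<Rightarrow> quat" where
  "qscale c q = Quat (c * qre q) (c * qi q) (c * qj q) (c * qk q)"
definition qmul :: "quat \<Rightarrow> quat \<Rightarrow> quat" where
  "qmul p q = Quat
     (qre p * qre q - qi p * qi q - qj p * qj q - qk p * qk q)
     (qre p * qi q + qi p * qre q + qj p * qk q - qk p * qj q)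
     (qre p * qj q - qi p * qk q + qj p * qre q + qk p * qi q)
     (qre p * qk q + qi p * qj q - qj p * qi q + qk p * qre q)"
definition qconj :: "quat \<Rightarrow> quat" where
  "qconj q = Quat (qre q) (- qi q) (- qj q) (- qk q)"

definition cadj :: "complex^'n^'n \<Rightarrow> complex^'n^'n" where
  "cadj M = (\<chi> i j. cnj (M $ j $ i))"

definition left_module :: "('a::ring_1 \<Rightarrow> 'v::ab_group_add \<Rightarrow> 'v) \<Rightarrow> bool" where
  "left_module sm \<longleftrightarrow>
     (\<forall>a x y. sm a (x + y) = sm a x + sm a y) \<and>
     (\<forall>a b x. sm (a + b) x = sm a x + sm b x) \<and>
     (\<forall>a b x. sm (a * b) x = sm a (sm b x)) \<and>
     (\<forall>x. sm 1 x = x)"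

definition is_basis :: "('a::ring_1 \<Rightarrow> 'v::ab_group_add \<Rightarrow> 'v) \<Rightarrow> nat \<Rightarrow> (nat \<Rightarrow> 'v) \<Rightarrow> bool" where
  "is_basis sm m w \<longleftrightarrow>
     (\<forall>c. (\<Sum>j<m. sm (c j) (w j)) = 0 \<longrightarrow> (\<forall>j<m. c j = 0)) \<and>
     (\<forall>x. \<exists>c. x = (\<Sum>j<m. sm (c j) (w j)))"

definition weakly_unitary :: "('v \<Rightarrow> 'v \<Rightarrow> 'a::zero) \<Rightarrow> nat \<Rightarrow> (nat \<Rightarrow> 'v) \<Rightarrow> bool" where
  "weakly_unitary \<psi> m w \<longleftrightarrow> (\<forall>i<m. \<forall>j<m. i \<noteq> j \<longrightarrow> \<psi> (w i) (w j) = 0)"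

definition involution :: "('d::ring_1 \<Rightarrow> 'd) \<Rightarrow> bool" where
  "involution dag \<longleftrightarrow> (\<forall>x y. dag (x + y) = dag x + dag y) \<and>
     (\<forall>x y. dag (x * y) = dag y * dag x) \<and> (\<forall>x. dag (dag x) = x)"

definition skew_hermitian :: "('d::ring_1 \<Rightarrow> 'd) \<Rightarrow> ('d \<Rightarrow> 'v::ab_group_add \<Rightarrow> 'v) \<Rightarrow> ('v \<Rightarrow> 'v \<Rightarrow> 'd) \<Rightarrow> bool" where
  "skew_hermitian dag sm \<psi> \<longleftrightarrow>
     (\<forall>x x' y. \<psi> (x + x') y = \<psi> x y + \<psi> x' y) \<and>
     (\<forall>x y y'. \<psi> x (y + y') = \<psi> x y + \<psi> x y') \<and>
     (\<forall>a b x y. \<psi> (sm a x) (sm b y) = a * \<psi> x y * dag b) \<and>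
     (\<forall>x y. \<psi> y x = - dag (\<psi> x y))"

definition nondegenerate :: "('v::zero \<Rightarrow> 'v \<Rightarrow> 'd::zero) \<Rightarrow> bool" where
  "nondegenerate \<psi> \<longleftrightarrow> (\<forall>x. x \<noteq> 0 \<longrightarrow> (\<exists>y. \<psi> x y \<noteq> 0))"

text \<open>canonical embedding of \<open>\<rat>\<close> into a division ring of characteristic 0
  (the library's \<open>of_rat\<close> needs commutativity)\<close>
definition rat_emb :: "rat \<Rightarrow> 'd::division_ring" where
  "rat_emb q = of_int (fst (quotient_of q)) / of_int (snd (quotient_of q))"

definition rat_basis :: "'d::division_ring set \<Rightarrow> bool" where
  "rat_basis B \<longleftrightarrow> finite B \<and>
     (\<forall>c. (\<Sum>b\<in>B. rat_emb (c b) * b) = 0 \<longrightarrow> (\<forall>b\<in>B. c b = 0)) \<and>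
     (\<forall>x. \<exists>c. x = (\<Sum>b\<in>B. rat_emb (c b) * b))"

text \<open>\<open>\<iota> : D \<rightarrow> R\<close> realises \<open>R\<close> as \<open>D \<otimes>\<^sub>\<rat> \<real>\<close>: a ring homomorphism mapping some
  \<open>\<rat>\<close>-basis of \<open>D\<close> injectively onto an \<open>\<real>\<close>-basis of \<open>R\<close>.\<close>
definition real_scalar_extension :: "('d::division_ring \<Rightarrow> 'r::real_algebra_1) \<Rightarrow> bool" where
  "real_scalar_extension \<iota> \<longleftrightarrow>
     (\<forall>x y. \<iota> (x + y) = \<iota> x + \<iota> y) \<and> (\<forall>x y. \<iota> (x * y) = \<iota> x * \<iota> y) \<and> \<iota> 1 = 1 \<and>
     (\<exists>B. rat_basis B \<and> inj_on \<iota> B \<and> independent (\<iota> ` B) \<and> span (\<iota> ` B) = UNIV)"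

definition real_ext_inv :: "('d \<Rightarrow> 'd) \<Rightarrow> ('d \<Rightarrow> 'r::real_algebra_1) \<Rightarrow> ('r \<Rightarrow> 'r) \<Rightarrow> bool" where
  "real_ext_inv dag \<iota> dagR \<longleftrightarrow> linear dagR \<and> (\<forall>x. dagR (\<iota> x) = \<iota> (dag x))"

text \<open>\<open>V\<^sub>\<real> = V \<otimes>\<^sub>\<rat> \<real> = D\<^sub>\<real> \<otimes>\<^sub>D V\<close>: \<open>j : V \<rightarrow> W\<close> is \<open>\<iota>\<close>-semilinear and maps the
  \<open>D\<close>-basis \<open>v\<close> of \<open>V\<close> to a \<open>D\<^sub>\<real>\<close>-basis of \<open>W\<close>.\<close>
definition real_module_extension ::
  "('d::ring_1 \<Rightarrow> 'r::real_algebra_1) \<Rightarrow> ('d \<Rightarrow> 'v::ab_group_add \<Rightarrow> 'v) \<Rightarrow>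
   ('r \<Rightarrow> 'w::ab_group_add \<Rightarrow> 'w) \<Rightarrow> ('v \<Rightarrow> 'w) \<Rightarrow> nat \<Rightarrow> (nat \<Rightarrow> 'v) \<Rightarrow> bool" where
  "real_module_extension \<iota> sm smR j m v \<longleftrightarrow> left_module smR \<and>
     (\<forall>x y. j (x + y) = j x + j y) \<and> (\<forall>a x. j (sm a x) = smR (\<iota> a) (j x)) \<and>
     is_basis smR m (\<lambda>i. j (v i))"

definition real_form_extension ::
  "('d \<Rightarrow> 'r::real_algebra_1) \<Rightarrow> ('r \<Rightarrow> 'w::ab_group_add \<Rightarrow> 'w) \<Rightarrow> ('v \<Rightarrow> 'w) \<Rightarrow>
   ('v \<Rightarrow> 'v \<Rightarrow> 'd) \<Rightarrow> ('w \<Rightarrow> 'w \<Rightarrow> 'r) \<Rightarrow> bool" where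
  "real_form_extension \<iota> smR j \<psi> \<psi>R \<longleftrightarrow>
     (\<forall>x x' y. \<psi>R (x + x') y = \<psi>R x y + \<psi>R x' y) \<and>
     (\<forall>x y y'. \<psi>R x (y + y') = \<psi>R x y + \<psi>R x y') \<and>
     (\<forall>c x y. \<psi>R (smR (of_real c) x) y = of_real c * \<psi>R x y) \<and>
     (\<forall>c x y. \<psi>R x (smR (of_real c) y) = \<psi>R x y * of_real c) \<and>
     (\<forall>x y. \<psi>R (j x) (j y) = \<iota> (\<psi> x y))"

definition iso_III :: "('r::real_algebra_1 \<Rightarrow> 'r) \<Rightarrow> ('r \<Rightarrow> ('e::finite \<Rightarrow> quat)) \<Rightarrow> bool" where
  "iso_III dagR \<alpha> \<longleftrightarrow> bij \<alpha> \<and>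
     (\<forall>x y. \<alpha> (x + y) = (\<lambda>l. qadd (\<alpha> x l) (\<alpha> y l))) \<and>
     (\<forall>c x. \<alpha> (scaleR c x) = (\<lambda>l. qscale c (\<alpha> x l))) \<and>
     (\<forall>x y. \<alpha> (x * y) = (\<lambda>l. qmul (\<alpha> x l) (\<alpha> y l))) \<and>
     \<alpha> 1 = (\<lambda>l. qone) \<and>
     (\<forall>x. \<alpha> (dagR x) = (\<lambda>l. qconj (\<alpha> x l)))"

text \<open>Reduced trace \<open>Trd\<^sub>D\<^sub>\<^sub>\<real>\<^sub>/\<^sub>\<real>\<close>, computed through \<open>\<alpha>\<close> (\<open>Trd\<^sub>\<bbbH>\<^sub>/\<^sub>\<real>(q) = 2 Re q\<close>)\<close>
definition Trd_III :: "('r \<Rightarrow> ('e::finite \<Rightarrow> quat)) \<Rightarrow> 'r \<Rightarrow> real" where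
  "Trd_III \<alpha> x = (\<Sum>l\<in>UNIV. 2 * qre (\<alpha> x l))"

definition norm_III :: "('r::real_algebra_1 \<Rightarrow> 'r) \<Rightarrow> ('r \<Rightarrow> ('e::finite \<Rightarrow> quat)) \<Rightarrow> 'r \<Rightarrow> real" where
  "norm_III dagR \<alpha> a = sqrt (Trd_III \<alpha> (a * dagR a))"

definition iso_IV :: "('r::real_algebra_1 \<Rightarrow> 'r) \<Rightarrow> ('r \<Rightarrow> ('e::finite \<Rightarrow> complex^'n^'n)) \<Rightarrow> bool" where
  "iso_IV dagR \<alpha> \<longleftrightarrow> bij \<alpha> \<and>
     (\<forall>x y. \<alpha> (x + y) = (\<lambda>l. \<alpha> x l + \<alpha> y l)) \<and>
     (\<forall>c x. \<alpha> (scaleR c x) = (\<lambda>l. scaleR c (\<alpha> x l))) \<and>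
     (\<forall>x y. \<alpha> (x * y) = (\<lambda>l. \<alpha> x l ** \<alpha> y l)) \<and>
     \<alpha> 1 = (\<lambda>l. mat 1) \<and>
     (\<forall>x. \<alpha> (dagR x) = (\<lambda>l. cadj (\<alpha> x l)))"

text \<open>Reduced trace \<open>Trd\<^sub>D\<^sub>\<^sub>\<real>\<^sub>/\<^sub>\<real> = Tr\<^sub>F\<^sub>\<^sub>\<real>\<^sub>/\<^sub>\<real> \<circ> Trd\<close>, computed through \<open>\<alpha>\<close>\<close>
definition Trd_IV :: "('r \<Rightarrow> ('e::finite \<Rightarrow> complex^'n^'n)) \<Rightarrow> 'r \<Rightarrow> real" where
  "Trd_IV \<alpha> x = (\<Sum>l\<in>UNIV. 2 * Re (trace (\<alpha> x l)))"

definition norm_IV :: "('r::real_algebra_1 \<Rightarrow> 'r) \<Rightarrow> ('r \<Rightarrow> ('e::finite \<Rightarrow> complex^'n^'n)) \<Rightarrow> 'r \<Rightarrow> real" where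
  "norm_IV dagR \<alpha> a = sqrt (Trd_IV \<alpha> (a * dagR a))"

end

theory Submission
  imports Defs
begin

(*
  Each \<psi>(v\<^sub>j, v\<^sub>j) is a nonzero, hence invertible, element b of D with b\<^sup>\<dagger> = -b, and
  \<psi>\<^sub>\<real>(t v\<^sub>j, t v\<^sub>j) = t b t\<^sup>\<dagger>.  So it suffices to find, for every skew unit b of D\<^sub>\<real>, a unit
  t with t b t\<^sup>\<dagger> in normal form and a bound on s = t\<^sup>-\<^sup>1; rescaling v\<^sub>j by t\<^sub>j keeps the basis
  weakly unitary.  Through \<alpha> this problem splits into the e simple factors.
  In a factor \<bbbH>, b is a pure quaternion of norm r and an explicit rotation-dilation \<sigma>
  with \<sigma> \<sigma>\<^sup>* = r satisfies \<sigma>\<^sup>-\<^sup>1 b (\<sigma>\<^sup>-\<^sup>1)\<^sup>* = i.  In a factor M\<^sub>d(\<complex>), the spectral theorem for the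
  Hermitian matrix i b gives b = U diag(-i \<mu>\<^sub>j) U\<^sup>* with U unitary and real \<mu>\<^sub>j \<noteq> 0, and
  s = U diag(\<surd>|\<mu>\<^sub>j|) works.  In both cases Trd(s s\<^sup>\<dagger>) is a sum of ke terms |\<mu>| whose squares
  sum to Trd(b b\<^sup>\<dagger>), so Cauchy-Schwarz gives |s|\<^sub>D\<^sup>4 \<le> 2ke |b|\<^sub>D\<^sup>2.
*)

section \<open>Rescaling a weakly unitary basis\<close>

lemma left_module_zero:
  assumes "left_module sm"
  shows "sm 0 x = 0" and "sm a 0 = 0"
proof -
  have "sm (0 + 0) x = sm 0 x + sm 0 x" and "sm a (0 + 0) = sm a 0 + sm a 0"
    using assms unfolding left_module_def by blast+
  then show "sm 0 x = 0" and "sm a 0 = 0" by simp_all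
qed

lemma is_basis_nonzero:
  assumes "left_module sm" and "is_basis sm m v" and "j < m"
  shows "v j \<noteq> 0"
proof
  assume "v j = 0"
  then have "(\<Sum>i<m. sm (if i = j then 1 else 0) (v i)) = 0"
    by (intro sum.neutral) (auto simp: left_module_zero[OF assms(1)])
  moreover have "(\<Sum>i<m. sm (c i) (v i)) = 0 \<Longrightarrow> c j = 0" for c
    using assms(2,3) unfolding is_basis_def by blast
  ultimately show False by fastforce
qed

lemma weakly_unitary_diag_nonzero:
  assumes V: "left_module sm"
    and psi: "skew_hermitian dag sm \<psi>" "nondegenerate \<psi>"
    and basis: "is_basis sm m v" "weakly_unitary \<psi> m v"
    and j: "j < m"
  shows "\<psi> (v j) (v j) \<noteq> 0"
proof
  assume diag0: "\<psi> (v j) (v j) = 0"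
  have additive: "\<psi> x (y + y') = \<psi> x y + \<psi> x y'" for x y y'
    using psi(1) unfolding skew_hermitian_def by blast
  have scale_right: "\<psi> x (sm b y) = \<psi> x y * dag b" for x b y
    using psi(1) V unfolding skew_hermitian_def left_module_def by (metis mult_1)
  have "\<psi> (v j) y = 0" for y
  proof -
    obtain c where y: "y = (\<Sum>i<m. sm (c i) (v i))"
      using basis(1) unfolding is_basis_def by blast
    have "\<psi> (v j) y = (\<Sum>i<m. \<psi> (v j) (sm (c i) (v i)))"
      unfolding y using additive additive[of "v j" 0 0]
      by (intro sum_comp_morphism[symmetric, unfolded comp_def]) simp_all
    also have "\<dots> = 0"
    proof (intro sum.neutral ballI)
      fix i assume "i \<in> {..<m}"
      then show "\<psi> (v j) (sm (c i) (v i)) = 0"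
        using basis(2) diag0 j by (cases "i = j") (auto simp: scale_right weakly_unitary_def)
    qed
    finally show ?thesis .
  qed
  then show False
    using psi(2) is_basis_nonzero[OF V basis(1) j] unfolding nondegenerate_def by blast
qed

lemma is_basis_rescale:
  assumes lm: "left_module sm" and B: "is_basis sm m w"
    and units: "\<forall>j<m. s j * t j = 1 \<and> t j * s j = 1"
  shows "is_basis sm m (\<lambda>j. sm (t j) (w j))"
proof -
  have mul: "sm (a * b) x = sm a (sm b x)" for a b x
    using lm unfolding left_module_def by auto
  have indep: "\<And>c. (\<Sum>j<m. sm (c j) (w j)) = 0 \<Longrightarrow> \<forall>j<m. c j = 0"
    and spans: "\<And>x. \<exists>c. x = (\<Sum>j<m. sm (c j) (w j))"
    using B unfolding is_basis_def by auto
  show ?thesis unfolding is_basis_def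
  proof (intro conjI allI impI)
    fix c j assume "(\<Sum>j<m. sm (c j) (sm (t j) (w j))) = 0" and j: "j < m"
    then have "c j * t j = 0"
      using indep[of "\<lambda>j. c j * t j"] by (simp add: mul)
    then have "c j * t j * s j = 0" by simp
    then show "c j = 0" using units j by (simp add: mult.assoc)
  next
    fix x
    obtain c where x: "x = (\<Sum>j<m. sm (c j) (w j))" using spans by blast
    have "x = (\<Sum>j<m. sm (c j * s j) (sm (t j) (w j)))"
      unfolding x using units by (intro sum.cong) (auto simp: mul[symmetric] mult.assoc)
    then show "\<exists>c. x = (\<Sum>j<m. sm (c j) (sm (t j) (w j)))" by (rule exI[of _ "\<lambda>j. c j * s j"])
  qed
qed

lemma real_form_extension_linear:
  assumes lm: "left_module smR" and psiR: "real_form_extension \<iota> smR jV \<psi> \<psi>R"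
  shows "linear (\<lambda>s. \<psi>R (smR s x) y)" and "linear (\<lambda>s. \<psi>R x (smR s y))"
proof -
  have smR_add: "smR (a + b) z = smR a z + smR b z"
    and smR_mult: "smR (a * b) z = smR a (smR b z)" for a b z
    using lm unfolding left_module_def by blast+
  have scaleR_smR: "smR (c *\<^sub>R a) z = smR (of_real c) (smR a z)" for c a z
    by (simp add: scaleR_conv_of_real smR_mult)
  have add: "\<psi>R (z + z') w = \<psi>R z w + \<psi>R z' w" "\<psi>R w (z + z') = \<psi>R w z + \<psi>R w z'"
    and scale_left: "\<psi>R (smR (of_real c) z) w = of_real c * \<psi>R z w"
    and scale_right: "\<psi>R w (smR (of_real c) z) = \<psi>R w z * of_real c" for z z' w c
    using psiR unfolding real_form_extension_def by blast+
  show "linear (\<lambda>s. \<psi>R (smR s x) y)"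
    by (rule linearI) (simp_all only: smR_add add scaleR_smR scale_left, simp add: scaleR_conv_of_real)
  show "linear (\<lambda>s. \<psi>R x (smR s y))"
    by (rule linearI) (simp_all only: smR_add add scaleR_smR scale_right, simp add: of_real_def)
qed

lemma real_form_extension_sesquilinear:
  fixes \<iota> :: "'d::division_ring \<Rightarrow> 'r::real_algebra_1"
  assumes DR: "real_scalar_extension \<iota>" and dagR: "real_ext_inv dag \<iota> dagR"
    and psi: "skew_hermitian dag sm \<psi>"
    and VR: "real_module_extension \<iota> sm smR jV m v"
    and psiR: "real_form_extension \<iota> smR jV \<psi> \<psi>R"
  shows "\<psi>R (smR s (jV x)) (smR s' (jV y)) = s * \<iota> (\<psi> x y) * dagR s'"
proof -
  obtain B where span: "span (\<iota> ` B) = UNIV"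
    using DR unfolding real_scalar_extension_def by blast
  have lm: "left_module smR" and jV_scale: "jV (sm a z) = smR (\<iota> a) (jV z)" for a z
    using VR unfolding real_module_extension_def by auto
  have lin_dagR: "linear dagR" and dagR_\<iota>: "dagR (\<iota> a) = \<iota> (dag a)" for a
    using dagR unfolding real_ext_inv_def by auto
  have \<iota>_mult: "\<iota> (a * b) = \<iota> a * \<iota> b" for a b
    using DR unfolding real_scalar_extension_def by blast
  have psi_scale: "\<psi> (sm a x) (sm b y) = a * \<psi> x y * dag b" for a b x y
    using psi unfolding skew_hermitian_def by blast
  have psiR_jV: "\<psi>R (jV x) (jV y) = \<iota> (\<psi> x y)" for x y
    using psiR unfolding real_form_extension_def by blast
  have on_image: "\<psi>R (smR (\<iota> a) (jV x)) (smR (\<iota> b) (jV y)) = \<iota> a * \<iota> (\<psi> x y) * dagR (\<iota> b)"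
    for a b
    by (simp add: jV_scale[symmetric] psiR_jV psi_scale \<iota>_mult dagR_\<iota>)
  have lin_left: "linear (\<lambda>s. s * \<iota> (\<psi> x y) * dagR s')" for s'
    by (intro linearI) (simp_all add: distrib_right)
  have lin_right: "linear (\<lambda>s'. s * \<iota> (\<psi> x y) * dagR s')"
    using linear_compose[OF lin_dagR linear_times] by (simp add: comp_def)
  have left: "\<psi>R (smR s (jV x)) (smR (\<iota> b) (jV y)) = s * \<iota> (\<psi> x y) * dagR (\<iota> b)" for b
    by (rule real_vector.linear_eq_on_span[where B = "\<iota> ` B",
          OF real_form_extension_linear(1)[OF lm psiR] lin_left]) (auto simp: span on_image)
  show ?thesis
    by (rule real_vector.linear_eq_on_span[where B = "\<iota> ` B",
          OF real_form_extension_linear(2)[OF lm psiR] lin_right]) (auto simp: span left)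
qed

lemma rescale_weakly_unitary_basis:
  fixes \<iota> :: "'d::division_ring \<Rightarrow> 'r::real_algebra_1"
  assumes DR: "real_scalar_extension \<iota>" and dagR: "real_ext_inv dag \<iota> dagR"
    and V: "left_module sm" and psi: "skew_hermitian dag sm \<psi>" "nondegenerate \<psi>"
    and basis: "is_basis sm m v" "weakly_unitary \<psi> m v"
    and VR: "real_module_extension \<iota> sm smR jV m v"
    and psiR: "real_form_extension \<iota> smR jV \<psi> \<psi>R"
    and normal_form: "\<And>b b'. dagR b = - b \<Longrightarrow> b' * b = 1 \<Longrightarrow>
      \<exists>s t. s * t = 1 \<and> t * s = 1 \<and> P (t * b * dagR t) \<and> N s b"
  shows "\<exists>s t :: nat \<Rightarrow> 'r. (\<forall>j<m. s j * t j = 1 \<and> t j * s j = 1) \<and>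
    is_basis smR m (\<lambda>j. smR (t j) (jV (v j))) \<and>
    weakly_unitary \<psi>R m (\<lambda>j. smR (t j) (jV (v j))) \<and>
    (\<forall>j<m. P (\<psi>R (smR (t j) (jV (v j))) (smR (t j) (jV (v j))))) \<and>
    (\<forall>j<m. N (s j) (\<iota> (\<psi> (v j) (v j))))"
proof -
  have \<iota>_add: "\<iota> (x + y) = \<iota> x + \<iota> y" and \<iota>_mult: "\<iota> (x * y) = \<iota> x * \<iota> y"
    and \<iota>_1: "\<iota> 1 = 1" for x y
    using DR unfolding real_scalar_extension_def by blast+
  have \<iota>_0: "\<iota> 0 = 0" using \<iota>_add[of 0 0] by simp
  have \<iota>_minus: "\<iota> (- x) = - \<iota> x" for x
    using minus_unique[of "\<iota> x" "\<iota> (- x)"] \<iota>_add[of x "- x"] \<iota>_0 by simp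
  have sesq: "\<psi>R (smR s (jV x)) (smR s' (jV y)) = s * \<iota> (\<psi> x y) * dagR s'" for s s' x y
    by (rule real_form_extension_sesquilinear[OF DR dagR psi(1) VR psiR])
  have "\<exists>s t. s * t = 1 \<and> t * s = 1 \<and> P (t * \<iota> (\<psi> (v j) (v j)) * dagR t)
      \<and> N s (\<iota> (\<psi> (v j) (v j)))" if j: "j < m" for j
  proof (rule normal_form)
    let ?a = "\<psi> (v j) (v j)"
    have "?a \<noteq> 0" by (rule weakly_unitary_diag_nonzero[OF V psi basis j])
    then show "\<iota> (inverse ?a) * \<iota> ?a = 1"
      by (simp add: \<iota>_mult[symmetric] \<iota>_1)
    have "dag ?a = - ?a"
      using psi(1) unfolding skew_hermitian_def by (metis minus_minus)
    then show "dagR (\<iota> ?a) = - \<iota> ?a"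
      using dagR by (simp add: real_ext_inv_def \<iota>_minus)
  qed
  then obtain s t where st: "\<And>j. j < m \<Longrightarrow> s j * t j = 1 \<and> t j * s j = 1 \<and>
      P (t j * \<iota> (\<psi> (v j) (v j)) * dagR (t j)) \<and> N (s j) (\<iota> (\<psi> (v j) (v j)))"
    by metis
  have "is_basis smR m (\<lambda>j. smR (t j) (jV (v j)))"
    using VR st by (intro is_basis_rescale) (auto simp: real_module_extension_def)
  moreover have "weakly_unitary \<psi>R m (\<lambda>j. smR (t j) (jV (v j)))"
    using basis(2) by (simp add: weakly_unitary_def sesq \<iota>_0)
  ultimately show ?thesis
    using st by (intro exI[of _ s] exI[of _ t]) (simp add: sesq)
qed

section \<open>Reduction to the simple factors\<close>

lemma sqrt_sum_Cauchy_Schwarz_bound: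
  fixes T Q :: "'e::finite \<Rightarrow> real"
  assumes k: "k > 0" and T: "\<And>l. T l \<ge> 0" and TQ: "\<And>l. (T l)\<^sup>2 \<le> k * Q l"
  shows "sqrt (\<Sum>l\<in>UNIV. 2 * T l)
    \<le> (2 * k * real CARD('e)) powr (1/4) * sqrt (sqrt (\<Sum>l\<in>UNIV. 2 * Q l))"
proof -
  define e where "e = real CARD('e)"
  define c where "c = (2 * k * e) powr (1/4)"
  have e: "e > 0" by (simp add: e_def)
  then have c_square: "c\<^sup>2 = sqrt (2 * k * e)"
    unfolding c_def power2_eq_square using k
    by (simp add: powr_add[symmetric] powr_half_sqrt[symmetric])
  have "(\<Sum>l\<in>UNIV. T l)\<^sup>2 \<le> (\<Sum>l\<in>UNIV. (T l)\<^sup>2) * e"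
    unfolding e_def by (rule sum_squared_le_sum_of_squares)
  also have "\<dots> \<le> (\<Sum>l\<in>UNIV. k * Q l) * e"
    by (intro mult_right_mono sum_mono TQ) (simp add: e_def)
  finally have "(2 * (\<Sum>l\<in>UNIV. T l))\<^sup>2 \<le> (c\<^sup>2)\<^sup>2 * (2 * (\<Sum>l\<in>UNIV. Q l))"
    using k e by (simp add: c_square sum_distrib_left[symmetric] power_mult_distrib algebra_simps)
  then have "2 * (\<Sum>l\<in>UNIV. T l) \<le> c\<^sup>2 * sqrt (2 * (\<Sum>l\<in>UNIV. Q l))"
    using T by (metis real_le_rsqrt real_sqrt_mult real_sqrt_pow2_iff real_sqrt_power zero_le_power2)
  then have "sqrt (2 * (\<Sum>l\<in>UNIV. T l)) \<le> c * sqrt (sqrt (2 * (\<Sum>l\<in>UNIV. Q l)))"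
    by (metis real_sqrt_le_mono real_sqrt_mult real_sqrt_abs abs_of_nonneg c_def powr_ge_zero)
  then show ?thesis by (simp add: c_def e_def sum_distrib_left)
qed

lemma bij_hom_factorwise_normal_form:
  fixes \<alpha> :: "'r::ring_1 \<Rightarrow> 'e \<Rightarrow> 'a"
  assumes bij: "bij \<alpha>"
    and mult: "\<And>x y. \<alpha> (x * y) = (\<lambda>l. mul (\<alpha> x l) (\<alpha> y l))"
    and one: "\<alpha> 1 = (\<lambda>l. unit)"
    and adj: "\<And>x. \<alpha> (dagR x) = (\<lambda>l. adj (\<alpha> x l))"
    and factorwise: "\<And>l. \<exists>\<sigma> \<tau>. mul \<sigma> \<tau> = unit \<and> mul \<tau> \<sigma> = unit \<and>
      P l (mul (mul \<tau> (\<alpha> b l)) (adj \<tau>)) \<and> Q l \<sigma>"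
  shows "\<exists>s t. s * t = 1 \<and> t * s = 1 \<and> (\<forall>l. P l (\<alpha> (t * b * dagR t) l)) \<and> (\<forall>l. Q l (\<alpha> s l))"
proof -
  obtain \<sigma> \<tau> where \<sigma>\<tau>: "\<And>l. mul (\<sigma> l) (\<tau> l) = unit \<and> mul (\<tau> l) (\<sigma> l) = unit \<and>
      P l (mul (mul (\<tau> l) (\<alpha> b l)) (adj (\<tau> l))) \<and> Q l (\<sigma> l)"
    using factorwise by metis
  define s where "s = inv \<alpha> \<sigma>"
  define t where "t = inv \<alpha> \<tau>"
  have \<alpha>_s: "\<alpha> s = \<sigma>" and \<alpha>_t: "\<alpha> t = \<tau>"
    unfolding s_def t_def using bij by (simp_all add: bij_is_surj surj_f_inv_f)
  have "\<alpha> (s * t) = \<alpha> 1" and "\<alpha> (t * s) = \<alpha> 1"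
    using \<sigma>\<tau> by (simp_all add: mult one \<alpha>_s \<alpha>_t)
  then have "s * t = 1" and "t * s = 1"
    using bij by (simp_all add: bij_is_inj inj_eq)
  moreover have "\<alpha> (t * b * dagR t) l = mul (mul (\<tau> l) (\<alpha> b l)) (adj (\<tau> l))" for l
    by (simp add: mult adj \<alpha>_t)
  ultimately show ?thesis
    using \<sigma>\<tau> by (intro exI[of _ s] exI[of _ t]) (simp add: \<alpha>_s)
qed

section \<open>Quaternion factors\<close>

lemma quat_pure_normal_form:
  assumes pure: "qre q = 0" and nonzero: "q \<noteq> qzero"
  shows "\<exists>\<sigma> \<tau>. qmul \<sigma> \<tau> = qone \<and> qmul \<tau> \<sigma> = qone \<and> qmul (qmul \<tau> q) (qconj \<tau>) = q_i \<and>
    qre (qmul \<sigma> (qconj \<sigma>)) \<ge> 0 \<and> (qre (qmul \<sigma> (qconj \<sigma>)))\<^sup>2 = qre (qmul q (qconj q))"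
proof -
  obtain x y z where q: "q = Quat 0 x y z" using pure by (cases q) auto
  define r where "r = sqrt (x\<^sup>2 + y\<^sup>2 + z\<^sup>2)"
  have "x\<^sup>2 + y\<^sup>2 + z\<^sup>2 \<noteq> 0" using nonzero q by (auto simp: qzero_def add_nonneg_eq_0_iff)
  moreover have "x\<^sup>2 + y\<^sup>2 + z\<^sup>2 \<ge> 0" by simp
  ultimately have "x\<^sup>2 + y\<^sup>2 + z\<^sup>2 > 0" by linarith
  then have rr: "r\<^sup>2 = x\<^sup>2 + y\<^sup>2 + z\<^sup>2" and r: "r > 0"
    unfolding r_def by simp_all
  have norm_q: "qre (qmul q (qconj q)) = r\<^sup>2"
    using rr by (simp add: q qmul_def qconj_def power2_eq_square)
  have "\<bar>x\<bar> \<le> r" unfolding r_def by (rule real_le_rsqrt) (simp add: power2_abs)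
  then consider "r + x > 0" | "r + x = 0" by linarith
  then show ?thesis
  proof cases
    case 1
    \<comment> \<open>\<sigma> is proportional to r - q i, which vanishes exactly when q = -r i (the second case).\<close>
    define \<mu> where "\<mu> = 1 / sqrt (2 * (r + x))"
    have \<mu>: "\<mu>\<^sup>2 * (2 * (r + x)) = 1" unfolding \<mu>_def using 1 by (simp add: power_divide)
    define \<sigma> where "\<sigma> = Quat (\<mu> * (r + x)) 0 (- \<mu> * z) (\<mu> * y)"
    define \<tau> where "\<tau> = Quat (\<mu> * (r + x) / r) 0 (\<mu> * z / r) (- \<mu> * y / r)"
    have "qre (qmul \<sigma> (qconj \<sigma>)) = \<mu>\<^sup>2 * ((r + x)\<^sup>2 + z\<^sup>2 + y\<^sup>2)"
      by (simp add: \<sigma>_def qmul_def qconj_def power2_eq_square algebra_simps)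
    also have "\<dots> = r" using \<mu> rr by algebra
    finally have "qre (qmul \<sigma> (qconj \<sigma>)) = r" .
    moreover have "qmul \<sigma> \<tau> = qone" and "qmul \<tau> \<sigma> = qone" and "qmul (qmul \<tau> q) (qconj \<tau>) = q_i"
      unfolding \<sigma>_def \<tau>_def q qmul_def qconj_def qone_def q_i_def using \<mu> rr r
      by (simp_all add: field_simps) algebra+
    ultimately show ?thesis using norm_q r by (intro exI[of _ \<sigma>] exI[of _ \<tau>]) simp
  next
    case 2
    then have "x = - r" by simp
    with rr have "y\<^sup>2 + z\<^sup>2 = 0" by simp
    then have "y = 0" and "z = 0" by (simp_all add: sum_power2_eq_zero_iff)
    define \<sigma> where "\<sigma> = Quat 0 0 (sqrt r) 0"
    define \<tau> where "\<tau> = Quat 0 0 (- 1 / sqrt r) 0"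
    have "qre (qmul \<sigma> (qconj \<sigma>)) = r" and "qmul \<sigma> \<tau> = qone" and "qmul \<tau> \<sigma> = qone"
      and "qmul (qmul \<tau> q) (qconj \<tau>) = q_i"
      unfolding \<sigma>_def \<tau>_def q qmul_def qconj_def qone_def q_i_def \<open>x = - r\<close> \<open>y = 0\<close> \<open>z = 0\<close>
      using r by (simp_all add: field_simps)
    then show ?thesis using norm_q r by (intro exI[of _ \<sigma>] exI[of _ \<tau>]) simp
  qed
qed

lemma iso_III_normal_form:
  fixes \<alpha> :: "'r::real_algebra_1 \<Rightarrow> ('e::finite \<Rightarrow> quat)"
  assumes iso: "iso_III dagR \<alpha>" and skew: "dagR b = - b" and inverse: "b' * b = 1"
  shows "\<exists>s t. s * t = 1 \<and> t * s = 1 \<and> \<alpha> (t * b * dagR t) = (\<lambda>l. q_i) \<and>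
    norm_III dagR \<alpha> s \<le> (2 * 1 * real CARD('e)) powr (1/4) * sqrt (norm_III dagR \<alpha> b)"
proof -
  have bij: "bij \<alpha>" and scale: "\<And>c x. \<alpha> (c *\<^sub>R x) = (\<lambda>l. qscale c (\<alpha> x l))"
    and mult: "\<And>x y. \<alpha> (x * y) = (\<lambda>l. qmul (\<alpha> x l) (\<alpha> y l))"
    and one: "\<alpha> 1 = (\<lambda>l. qone)" and adj: "\<And>x. \<alpha> (dagR x) = (\<lambda>l. qconj (\<alpha> x l))"
    using iso unfolding iso_III_def by blast+
  have pure: "qre (\<alpha> b l) = 0" for l
  proof -
    have "qconj (\<alpha> b l) = qscale (- 1) (\<alpha> b l)"
      using adj[of b] scale[of "- 1" b] skew by (metis scaleR_minus1_left)
    then show ?thesis by (simp add: qconj_def qscale_def)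
  qed
  have nonzero: "\<alpha> b l \<noteq> qzero" for l
  proof
    assume "\<alpha> b l = qzero"
    moreover have "qmul (\<alpha> b' l) (\<alpha> b l) = qone"
      using arg_cong[OF inverse, of \<alpha>] mult one by metis
    ultimately show False by (simp add: qmul_def qone_def qzero_def)
  qed
  obtain s t where "s * t = 1" and "t * s = 1" and "\<forall>l. \<alpha> (t * b * dagR t) l = q_i"
    and norms: "\<forall>l. qre (qmul (\<alpha> s l) (qconj (\<alpha> s l))) \<ge> 0 \<and>
      (qre (qmul (\<alpha> s l) (qconj (\<alpha> s l))))\<^sup>2 = qre (qmul (\<alpha> b l) (qconj (\<alpha> b l)))"
    using bij_hom_factorwise_normal_form[OF bij mult one adj, where b = b and P = "\<lambda>l x. x = q_i"
        and Q = "\<lambda>l \<sigma>. qre (qmul \<sigma> (qconj \<sigma>)) \<ge> 0 \<and>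
          (qre (qmul \<sigma> (qconj \<sigma>)))\<^sup>2 = qre (qmul (\<alpha> b l) (qconj (\<alpha> b l)))"]
      quat_pure_normal_form[OF pure nonzero] by blast
  moreover have "norm_III dagR \<alpha> s \<le> (2 * 1 * real CARD('e)) powr (1/4) * sqrt (norm_III dagR \<alpha> b)"
    unfolding norm_III_def Trd_III_def
    by (simp add: mult adj) (rule sqrt_sum_Cauchy_Schwarz_bound[where k = 1, simplified], use norms in auto)
  ultimately show ?thesis by auto
qed

section \<open>Eigenvectors of Hermitian matrices\<close>

definition cinner :: "complex^'n \<Rightarrow> complex^'n \<Rightarrow> complex" where
  "cinner x y = (\<Sum>i\<in>UNIV. cnj (x $ i) * y $ i)"

lemma cinner_add_left [simp]: "cinner (x + y) z = cinner x z + cinner y z"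
  by (simp add: cinner_def algebra_simps sum.distrib)

lemma cinner_add_right [simp]: "cinner x (y + z) = cinner x y + cinner x z"
  by (simp add: cinner_def algebra_simps sum.distrib)

lemma cinner_diff_right [simp]: "cinner x (y - z) = cinner x y - cinner x z"
  by (simp add: cinner_def algebra_simps sum_subtractf)

lemma cinner_scale_left [simp]: "cinner (c *s x) y = cnj c * cinner x y"
  by (simp add: cinner_def algebra_simps sum_distrib_left)

lemma cinner_scale_right [simp]: "cinner x (c *s y) = c * cinner x y"
  by (simp add: cinner_def algebra_simps sum_distrib_left)

lemma scaleR_vec_eq_smult: "r *\<^sub>R x = (of_real r :: complex) *s x"
  by (simp add: vec_eq_iff scaleR_conv_of_real[where 'a = complex])

lemma cinner_scaleR_left [simp]: "cinner (r *\<^sub>R x) y = of_real r * cinner x y"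
  and cinner_scaleR_right [simp]: "cinner x (r *\<^sub>R y) = of_real r * cinner x y"
  by (simp_all add: scaleR_vec_eq_smult)

lemma cinner_zero_left [simp]: "cinner 0 y = 0"
  and cinner_zero_right [simp]: "cinner x 0 = 0"
  by (simp_all add: cinner_def)

lemma cinner_commute: "cinner y x = cnj (cinner x y)"
  by (simp add: cinner_def mult.commute)

lemma cinner_sum_right: "cinner x (sum f A) = (\<Sum>a\<in>A. cinner x (f a))"
  by (rule sum_comp_morphism[symmetric, unfolded comp_def]) simp_all

lemma cinner_self: "cinner x x = of_real ((norm x)\<^sup>2)"
proof -
  have "(norm x)\<^sup>2 = (\<Sum>i\<in>UNIV. (cmod (x $ i))\<^sup>2)"
    unfolding norm_vec_def L2_set_def by (simp add: sum_nonneg)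
  then have "of_real ((norm x)\<^sup>2) = (\<Sum>i\<in>UNIV. complex_of_real ((cmod (x $ i))\<^sup>2))"
    by simp
  also have "\<dots> = cinner x x"
    unfolding cinner_def by (intro sum.cong refl) (simp only: complex_norm_square mult.commute)
  finally show ?thesis ..
qed

lemma cinner_adjoint: "cinner (H *v x) y = cinner x (cadj H *v y)"
proof -
  have "cinner (H *v x) y = (\<Sum>i\<in>UNIV. \<Sum>j\<in>UNIV. cnj (H $ i $ j) * cnj (x $ j) * y $ i)"
    by (simp add: cinner_def matrix_vector_mult_def sum_distrib_right)
  also have "\<dots> = (\<Sum>j\<in>UNIV. \<Sum>i\<in>UNIV. cnj (H $ i $ j) * cnj (x $ j) * y $ i)"
    by (rule sum.swap)
  also have "\<dots> = cinner x (cadj H *v y)"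
    by (simp add: cinner_def matrix_vector_mult_def cadj_def sum_distrib_left algebra_simps)
  finally show ?thesis .
qed

lemma continuous_on_cinner_right: "continuous_on UNIV (cinner x)"
  unfolding cinner_def
  by (intro continuous_on_sum continuous_on_mult continuous_on_const
      continuous_on_component continuous_on_id)

lemma continuous_on_rayleigh: "continuous_on UNIV (\<lambda>x. Re (cinner x (H *v x)))"
  unfolding cinner_def matrix_vector_mult_def vec_lambda_beta
  by (intro continuous_on_Re continuous_on_sum continuous_on_mult continuous_on_cnj
      continuous_on_const continuous_on_component continuous_on_id)

lemma nonneg_linear_quadratic_le_zero:
  fixes a b :: real
  assumes a: "a \<ge> 0" and le: "\<And>t. a * t + b * t\<^sup>2 \<le> 0"
  shows "a = 0"
proof (rule ccontr)
  assume "a \<noteq> 0"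
  with a have a_pos: "a > 0" by simp
  define t where "t = a / (2 * (\<bar>b\<bar> + 1))"
  have t: "t > 0" using a_pos by (simp add: t_def)
  have "\<bar>b\<bar> * t \<le> a / 2" unfolding t_def using a_pos by (simp add: field_simps)
  then have "\<bar>b * t\<^sup>2\<bar> \<le> a / 2 * t"
    using t by (simp add: abs_mult power2_eq_square mult.assoc[symmetric] mult_right_mono)
  then have "a * t + b * t\<^sup>2 \<ge> a / 2 * t" by linarith
  moreover have "a / 2 * t > 0" using a_pos t by simp
  ultimately show False using le[of t] by linarith
qed

lemma rayleigh_maximizer_exists:
  fixes H :: "complex^'n^'n" and S :: "(complex^'n) set"
  assumes closed: "closed S" and scale: "\<And>r x. x \<in> S \<Longrightarrow> r *\<^sub>R x \<in> S"
    and nonzero: "x1 \<in> S" "x1 \<noteq> 0"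
  defines "f \<equiv> \<lambda>x. Re (cinner x (H *v x))"
  shows "\<exists>x0\<in>S. norm x0 = 1 \<and> (\<forall>z\<in>S. f z \<le> f x0 * (norm z)\<^sup>2)"
proof -
  define K where "K = S \<inter> sphere 0 1"
  have "compact K" unfolding K_def by (intro closed_Int_compact closed compact_sphere)
  moreover have "(1 / norm x1) *\<^sub>R x1 \<in> K" using nonzero scale by (simp add: K_def)
  moreover have "continuous_on K f"
    unfolding f_def by (rule continuous_on_subset[OF continuous_on_rayleigh]) simp
  ultimately obtain x0 where x0: "x0 \<in> K" and max: "\<And>y. y \<in> K \<Longrightarrow> f y \<le> f x0"
    using continuous_attains_sup[of K f] by blast
  have "f z \<le> f x0 * (norm z)\<^sup>2" if z: "z \<in> S" for z
  proof (cases "z = 0")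
    case False
    have homogeneous: "f (r *\<^sub>R z) = r\<^sup>2 * f z" for r
      by (simp add: f_def scaleR_vec_eq_smult vector_scalar_commute power2_eq_square)
    have "(1 / norm z) *\<^sub>R z \<in> K" using False scale z by (simp add: K_def)
    then have "f ((1 / norm z) *\<^sub>R z) \<le> f x0" by (rule max)
    then have "f z / (norm z)\<^sup>2 \<le> f x0" by (simp add: homogeneous power_divide)
    then show ?thesis using False by (simp add: divide_le_eq mult.commute)
  qed (simp add: f_def)
  then show ?thesis using x0 by (auto simp: K_def)
qed

(* First variation: y = H x0 - \<mu> x0 lies in S and is orthogonal to x0, and maximality of x0
   along x0 + t y gives 2 t |y|\<^sup>2 + O(t\<^sup>2) \<le> 0 for all real t, so y = 0. *)
lemma hermitian_rayleigh_maximizer_eigenvector: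
  fixes H :: "complex^'n^'n" and S :: "(complex^'n) set"
  assumes herm: "cadj H = H"
    and add: "\<And>x y. x \<in> S \<Longrightarrow> y \<in> S \<Longrightarrow> x + y \<in> S"
    and scale: "\<And>c x. x \<in> S \<Longrightarrow> c *s x \<in> S"
    and invariant: "\<And>x. x \<in> S \<Longrightarrow> H *v x \<in> S"
    and x0: "x0 \<in> S" "norm x0 = 1"
    and max: "\<And>z. z \<in> S \<Longrightarrow> Re (cinner z (H *v z)) \<le> Re (cinner x0 (H *v x0)) * (norm z)\<^sup>2"
  shows "H *v x0 = of_real (Re (cinner x0 (H *v x0))) *s x0"
proof -
  define f where "f x = Re (cinner x (H *v x))" for x
  define \<mu> where "\<mu> = cinner x0 (H *v x0)"
  have "cnj \<mu> = \<mu>"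
    unfolding \<mu>_def by (metis cinner_commute cinner_adjoint herm)
  then have \<mu>_real: "\<mu> = of_real (f x0)"
    by (simp add: f_def \<mu>_def complex_eq_iff)
  have x0_unit: "cinner x0 x0 = 1" using x0(2) by (simp add: cinner_self)
  define y where "y = H *v x0 - \<mu> *s x0"
  have y: "y \<in> S"
    using add[OF invariant[OF x0(1)] scale[OF x0(1), of "- \<mu>"]] by (simp add: y_def)
  have x0_y: "cinner x0 y = 0" by (simp add: y_def x0_unit \<mu>_def)
  have y_x0: "cinner y x0 = 0" by (subst cinner_commute) (simp add: x0_y)
  have Hx0: "H *v x0 = y + \<mu> *s x0" by (simp add: y_def)
  have x0_Hy: "cinner x0 (H *v y) = cinner y y"
    by (metis cinner_adjoint herm Hx0 cinner_add_left cinner_scale_left x0_y mult_zero_right add_0_right)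
  have y_Hx0: "cinner y (H *v x0) = cinner y y" by (simp add: Hx0 y_x0)
  define Y where "Y = (norm y)\<^sup>2"
  have y_y: "cinner y y = of_real Y" by (simp add: Y_def cinner_self)
  have "(2 * Y) * t + (f y - f x0 * Y) * t\<^sup>2 \<le> 0" for t
  proof -
    define z where "z = x0 + t *\<^sub>R y"
    have "cinner z z = of_real (1 + t\<^sup>2 * Y)"
      by (simp add: z_def x0_unit x0_y y_x0 y_y power2_eq_square)
    then have norm_z: "(norm z)\<^sup>2 = 1 + t\<^sup>2 * Y" by (simp only: cinner_self of_real_eq_iff)
    have "cinner z (H *v z) = \<mu> + of_real (2 * t * Y) + of_real (t\<^sup>2) * cinner y (H *v y)"
      by (simp add: z_def matrix_vector_right_distrib scaleR_vec_eq_smult vector_scalar_commute x0_Hy y_Hx0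
          y_y \<mu>_def[symmetric] algebra_simps power2_eq_square)
    then have "f z = f x0 + 2 * t * Y + t\<^sup>2 * f y" by (simp add: f_def \<mu>_real)
    moreover have "f z \<le> f x0 * (norm z)\<^sup>2"
      unfolding f_def by (rule max) (simp add: z_def scaleR_vec_eq_smult add scale y x0(1))
    ultimately show ?thesis unfolding norm_z by (simp add: algebra_simps)
  qed
  then have "2 * Y = 0" by (intro nonneg_linear_quadratic_le_zero) (simp_all add: Y_def)
  then have "y = 0" by (simp add: Y_def)
  then show ?thesis using Hx0 \<mu>_real by (simp add: f_def)
qed

lemma hermitian_invariant_subspace_eigenvector:
  fixes H :: "complex^'n^'n" and S :: "(complex^'n) set"
  assumes herm: "cadj H = H" and closed: "closed S"
    and add: "\<And>x y. x \<in> S \<Longrightarrow> y \<in> S \<Longrightarrow> x + y \<in> S"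
    and scale: "\<And>c x. x \<in> S \<Longrightarrow> c *s x \<in> S"
    and invariant: "\<And>x. x \<in> S \<Longrightarrow> H *v x \<in> S"
    and nonzero: "x1 \<in> S" "x1 \<noteq> 0"
  shows "\<exists>x\<in>S. cinner x x = 1 \<and> (\<exists>\<mu>::real. H *v x = of_real \<mu> *s x)"
proof -
  have "r *\<^sub>R x \<in> S" if "x \<in> S" for r x
    using scale[OF that] by (simp add: scaleR_vec_eq_smult)
  then obtain x0 where x0: "x0 \<in> S" "norm x0 = 1"
    and max: "\<forall>z\<in>S. Re (cinner z (H *v z)) \<le> Re (cinner x0 (H *v x0)) * (norm z)\<^sup>2"
    using rayleigh_maximizer_exists[OF closed _ nonzero, of H] by blast
  have "H *v x0 = of_real (Re (cinner x0 (H *v x0))) *s x0"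
    using max by (intro hermitian_rayleigh_maximizer_eigenvector[OF herm add scale invariant x0]) auto
  moreover have "cinner x0 x0 = 1" using x0(2) by (simp add: cinner_self)
  ultimately show ?thesis using x0(1) by blast
qed

lemma orthonormal_complement_nonzero:
  fixes E :: "(complex^'n) set"
  assumes E: "finite E" "card E < CARD('n)"
    and orthonormal: "\<forall>e\<in>E. \<forall>e'\<in>E. cinner e e' = (if e = e' then 1 else 0)"
  shows "\<exists>x. x \<noteq> 0 \<and> (\<forall>e\<in>E. cinner e x = 0)"
proof (rule ccontr)
  assume "\<nexists>x. x \<noteq> 0 \<and> (\<forall>e\<in>E. cinner e x = 0)"
  then have complement_zero: "x = 0" if "\<forall>e\<in>E. cinner e x = 0" for x
    using that by blast
  have "x \<in> vec.span E" for x
  proof -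
    define p where "p = (\<Sum>e\<in>E. cinner e x *s e)"
    have "cinner e' p = cinner e' x" if "e' \<in> E" for e'
    proof -
      have "cinner e' p = (\<Sum>e\<in>E. if e = e' then cinner e x else 0)"
        unfolding p_def cinner_sum_right using orthonormal that
        by (intro sum.cong) (auto simp: cinner_commute[of e'])
      also have "\<dots> = cinner e' x" using E(1) that by simp
      finally show ?thesis .
    qed
    then have "x = p" using complement_zero[of "x - p"] by simp
    moreover have "p \<in> vec.span E"
      unfolding p_def by (intro vec.span_sum vec.span_scale vec.span_base)
    ultimately show ?thesis by simp
  qed
  then have "(UNIV :: (complex^'n) set) \<subseteq> vec.span E" by blast
  then have "vec.dim (UNIV :: (complex^'n) set) \<le> card E"
    using E(1) by (rule vec.dim_le_card)
  then show False using E(2) vec_dim_card[where 'a = complex and 'n = 'n] by simp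
qed

lemma hermitian_orthonormal_eigenvectors:
  fixes H :: "complex^'n^'n"
  assumes herm: "cadj H = H" and k: "k \<le> CARD('n)"
  shows "\<exists>E. finite E \<and> card E = k \<and>
    (\<forall>e\<in>E. \<forall>e'\<in>E. cinner e e' = (if e = e' then 1 else 0)) \<and>
    (\<forall>e\<in>E. \<exists>\<mu>::real. H *v e = of_real \<mu> *s e)"
  using k
proof (induction k)
  case (Suc k)
  then obtain E where E: "finite E" "card E = k"
    and orthonormal: "\<forall>e\<in>E. \<forall>e'\<in>E. cinner e e' = (if e = e' then 1 else 0)"
    and eigen: "\<forall>e\<in>E. \<exists>\<mu>::real. H *v e = of_real \<mu> *s e"
    by auto
  define S where "S = {x. \<forall>e\<in>E. cinner e x = 0}"
  have "closed S"
    unfolding S_def Collect_ball_eq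
    by (intro closed_INT ballI closed_Collect_eq continuous_on_cinner_right continuous_on_const)
  moreover have "H *v x \<in> S" if "x \<in> S" for x
  proof -
    have "cinner e (H *v x) = 0" if "e \<in> E" for e
    proof -
      obtain \<mu> :: real where "H *v e = of_real \<mu> *s e" using eigen \<open>e \<in> E\<close> by blast
      then show ?thesis
        using \<open>x \<in> S\<close> \<open>e \<in> E\<close> cinner_adjoint[of H e x] by (simp add: herm S_def)
    qed
    then show ?thesis by (simp add: S_def)
  qed
  moreover have "x + y \<in> S" and "c *s x \<in> S" if "x \<in> S" "y \<in> S" for x y c
    using that by (simp_all add: S_def)
  moreover obtain x1 where "x1 \<in> S" "x1 \<noteq> 0"
    using orthonormal_complement_nonzero[OF E(1) _ orthonormal] E(2) Suc.prems
    by (auto simp: S_def)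
  ultimately obtain x where "x \<in> S" and x: "cinner x x = 1" "\<exists>\<mu>::real. H *v x = of_real \<mu> *s x"
    using hermitian_invariant_subspace_eigenvector[OF herm, of S x1] by blast
  have "x \<notin> E" using \<open>x \<in> S\<close> x(1) by (auto simp: S_def)
  moreover have "cinner e x = 0" and "cinner x e = 0" if "e \<in> E" for e
    using \<open>x \<in> S\<close> that cinner_commute[of x e] by (simp_all add: S_def)
  ultimately show ?case
    using E orthonormal eigen x by (intro exI[of _ "insert x E"]) auto
qed (rule exI[of _ "{}"], simp)

section \<open>Matrix factors\<close>

definition mdiag :: "('n::finite \<Rightarrow> complex) \<Rightarrow> complex^'n^'n" where
  "mdiag f = (\<chi> i j. if i = j then f i else 0)"

lemma matrix_mult_mdiag_right: "(X :: complex^'n^'m) ** mdiag f = (\<chi> i j. X $ i $ j * f j)"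
  by (simp add: vec_eq_iff matrix_matrix_mult_def mdiag_def if_distrib cong: if_cong)

lemma mdiag_mult: "mdiag f ** mdiag g = mdiag (\<lambda>i. f i * g i)"
  by (simp add: matrix_mult_mdiag_right) (simp add: mdiag_def vec_eq_iff)

lemma cadj_mdiag: "cadj (mdiag f) = mdiag (\<lambda>i. cnj (f i))"
  by (simp add: cadj_def mdiag_def vec_eq_iff)

lemma trace_mdiag: "trace (mdiag f) = sum f UNIV"
  by (simp add: trace_def mdiag_def)

lemma mdiag_1: "mdiag (\<lambda>_. 1) = mat 1"
  by (simp add: mdiag_def mat_def vec_eq_iff)

lemma cadj_cadj [simp]: "cadj (cadj X) = X"
  by (simp add: cadj_def vec_eq_iff)

lemma cadj_mult: "cadj ((X :: complex^'n^'n) ** Y) = cadj Y ** cadj X"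
  by (simp add: cadj_def matrix_matrix_mult_def vec_eq_iff mult.commute)

lemma trace_unitary_conj:
  fixes U X :: "complex^'n^'n"
  assumes "cadj U ** U = mat 1"
  shows "trace (U ** X ** cadj U) = trace X"
  using trace_mul_sym[of "U ** X" "cadj U"] assms by (simp add: matrix_mul_assoc)

lemma hermitian_unitary_diagonalization:
  fixes H :: "complex^'n^'n"
  assumes herm: "cadj H = H"
  shows "\<exists>U (\<mu>::'n \<Rightarrow> real). cadj U ** U = mat 1 \<and> U ** cadj U = mat 1 \<and>
    H ** U = U ** mdiag (\<lambda>j. of_real (\<mu> j))"
proof -
  obtain E where E: "finite E" "card E = CARD('n)"
    and orthonormal: "\<forall>e\<in>E. \<forall>e'\<in>E. cinner e e' = (if e = e' then 1 else 0)"
    and eigen: "\<forall>e\<in>E. \<exists>\<mu>::real. H *v e = of_real \<mu> *s e"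
    using hermitian_orthonormal_eigenvectors[OF herm order_refl] by auto
  obtain g where g: "bij_betw g (UNIV :: 'n set) E"
    using finite_same_card_bij[of "UNIV :: 'n set" E] E by auto
  then have gE: "g j \<in> E" and g_eq: "g a = g b \<longleftrightarrow> a = b" for j a b
    by (auto simp: bij_betw_def inj_on_def)
  have "\<forall>j. \<exists>\<mu>::real. H *v g j = of_real \<mu> *s g j" using eigen gE by blast
  then obtain \<mu> :: "'n \<Rightarrow> real" where \<mu>: "\<And>j. H *v g j = of_real (\<mu> j) *s g j"
    by metis
  define U where "U = (\<chi> i j. g j $ i)"
  have "(cadj U ** U) $ a $ b = cinner (g a) (g b)" for a b
    by (simp add: U_def cadj_def matrix_matrix_mult_def cinner_def)
  moreover have "cinner (g a) (g b) = (if a = b then 1 else 0)" for a b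
    using orthonormal gE by (simp add: g_eq)
  ultimately have "cadj U ** U = mat 1" by (simp add: vec_eq_iff mat_def)
  moreover from this have "U ** cadj U = mat 1" by (rule matrix_left_right_inverse1)
  moreover have "H ** U = U ** mdiag (\<lambda>j. of_real (\<mu> j))"
  proof -
    have "(H ** U) $ i $ j = (H *v g j) $ i" for i j
      by (simp add: U_def matrix_matrix_mult_def matrix_vector_mult_def)
    then show ?thesis
      using \<mu> by (simp add: vec_eq_iff matrix_mult_mdiag_right U_def mult.commute)
  qed
  ultimately show ?thesis by blast
qed

lemma skew_hermitian_unitary_diagonalization:
  fixes A :: "complex^'n^'n"
  assumes skew: "cadj A = - A"
  shows "\<exists>U (\<mu>::'n \<Rightarrow> real). cadj U ** U = mat 1 \<and> U ** cadj U = mat 1 \<and>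
    A = U ** mdiag (\<lambda>j. - \<i> * of_real (\<mu> j)) ** cadj U"
proof -
  define H where "H = (\<chi> i j. \<i> * A $ i $ j)"
  have "cnj (A $ j $ i) = - A $ i $ j" for i j
    using skew by (simp add: cadj_def vec_eq_iff)
  then have "cadj H = H" by (simp add: H_def cadj_def vec_eq_iff)
  then obtain U and \<mu> :: "'n \<Rightarrow> real" where unitary: "cadj U ** U = mat 1" "U ** cadj U = mat 1"
    and HU: "H ** U = U ** mdiag (\<lambda>j. of_real (\<mu> j))"
    using hermitian_unitary_diagonalization by blast
  have "(A ** U) $ i $ j = - \<i> * (H ** U) $ i $ j" for i j
    by (simp add: H_def matrix_matrix_mult_def sum_distrib_left mult.assoc[symmetric])
  then have "A ** U = U ** mdiag (\<lambda>j. - \<i> * of_real (\<mu> j))"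
    by (simp add: HU vec_eq_iff matrix_mult_mdiag_right)
  then have "A = U ** mdiag (\<lambda>j. - \<i> * of_real (\<mu> j)) ** cadj U"
    by (metis matrix_mul_assoc matrix_mul_rid unitary(2))
  with unitary show ?thesis by blast
qed

lemma mdiag_left_invertible_nonzero:
  assumes "X ** mdiag f = mat 1"
  shows "f j \<noteq> 0"
proof
  assume "f j = 0"
  then have "(X ** mdiag f) $ j $ j = 0" by (simp add: matrix_mult_mdiag_right)
  with assms show False by (simp add: mat_def)
qed

lemma unitary_diagonal_normal_form:
  fixes U :: "complex^'n^'n" and \<mu> :: "'n \<Rightarrow> real"
  assumes unitary: "cadj U ** U = mat 1" "U ** cadj U = mat 1"
    and nonzero: "\<And>j. \<mu> j \<noteq> 0"
  defines "A \<equiv> U ** mdiag (\<lambda>j. - \<i> * of_real (\<mu> j)) ** cadj U"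
  shows "\<exists>S T. S ** T = mat 1 \<and> T ** S = mat 1 \<and>
    T ** A ** cadj T = mdiag (\<lambda>j. - \<i> * of_real (sgn (\<mu> j))) \<and>
    trace (S ** cadj S) = (\<Sum>j\<in>UNIV. of_real \<bar>\<mu> j\<bar>) \<and>
    trace (A ** cadj A) = (\<Sum>j\<in>UNIV. of_real ((\<mu> j)\<^sup>2))"
proof -
  define d where "d j = sqrt \<bar>\<mu> j\<bar>" for j
  have d: "d j \<noteq> 0" and dd: "d j * d j = \<bar>\<mu> j\<bar>" for j
    using nonzero by (simp_all add: d_def)
  define D where "D = mdiag (\<lambda>j. complex_of_real (d j))"
  define D' where "D' = mdiag (\<lambda>j. complex_of_real (1 / d j))"
  have DD': "D ** D' = mat 1" "D' ** D = mat 1"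
    by (simp_all add: D_def D'_def mdiag_mult d flip: mdiag_1 of_real_mult)
  have adj_D: "cadj D = D" "cadj D' = D'" by (simp_all add: D_def D'_def cadj_mdiag)
  define S where "S = U ** D"
  define T where "T = D' ** cadj U"
  have "S ** T = U ** (D ** D') ** cadj U" and "T ** S = D' ** (cadj U ** U) ** D"
    by (simp_all add: S_def T_def matrix_mul_assoc)
  then have ST: "S ** T = mat 1" "T ** S = mat 1" by (simp_all add: DD' unitary)
  have "T ** A ** cadj T = D' ** (cadj U ** U) ** mdiag (\<lambda>j. - \<i> * of_real (\<mu> j))
      ** (cadj U ** U) ** D'"
    by (simp add: T_def A_def cadj_mult adj_D matrix_mul_assoc)
  also have "\<dots> = mdiag (\<lambda>j. - \<i> * of_real (\<mu> j / (d j * d j)))"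
    using d by (simp add: unitary D'_def mdiag_mult field_simps)
  also have "\<dots> = mdiag (\<lambda>j. - \<i> * of_real (sgn (\<mu> j)))"
    by (simp add: dd real_sgn_eq)
  finally have TAT: "T ** A ** cadj T = mdiag (\<lambda>j. - \<i> * of_real (sgn (\<mu> j)))" .
  have "trace (S ** cadj S) = trace (U ** (D ** D) ** cadj U)"
    by (simp add: S_def cadj_mult adj_D matrix_mul_assoc)
  also have "\<dots> = (\<Sum>j\<in>UNIV. of_real \<bar>\<mu> j\<bar>)"
    by (simp add: trace_unitary_conj unitary D_def mdiag_mult trace_mdiag dd flip: of_real_mult)
  finally have trace_S: "trace (S ** cadj S) = (\<Sum>j\<in>UNIV. of_real \<bar>\<mu> j\<bar>)" .
  have "trace (A ** cadj A) = trace (U ** (mdiag (\<lambda>j. - \<i> * of_real (\<mu> j)) **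
      cadj (mdiag (\<lambda>j. - \<i> * of_real (\<mu> j)))) ** cadj U)"
    by (simp add: A_def cadj_mult matrix_mul_assoc) (simp add: unitary flip: matrix_mul_assoc)
  also have "\<dots> = (\<Sum>j\<in>UNIV. of_real ((\<mu> j)\<^sup>2))"
    by (simp add: trace_unitary_conj unitary cadj_mdiag mdiag_mult trace_mdiag power2_eq_square
        algebra_simps)
  finally show ?thesis using ST TAT trace_S by blast
qed

lemma skew_hermitian_normal_form:
  fixes A B :: "complex^'n^'n"
  assumes skew: "cadj A = - A" and inverse: "B ** A = mat 1"
  shows "\<exists>S T. S ** T = mat 1 \<and> T ** S = mat 1 \<and>
    ((\<forall>a b. a \<noteq> b \<longrightarrow> (T ** A ** cadj T) $ a $ b = 0) \<and>
     (\<forall>a. (T ** A ** cadj T) $ a $ a \<in> {\<i>, - \<i>})) \<and>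
    (Re (trace (S ** cadj S)) \<ge> 0 \<and>
     (Re (trace (S ** cadj S)))\<^sup>2 \<le> real CARD('n) * Re (trace (A ** cadj A)))"
proof -
  obtain U and \<mu> :: "'n \<Rightarrow> real" where unitary: "cadj U ** U = mat 1" "U ** cadj U = mat 1"
    and A: "A = U ** mdiag (\<lambda>j. - \<i> * of_real (\<mu> j)) ** cadj U"
    using skew_hermitian_unitary_diagonalization[OF skew] by blast
  have "(cadj U ** B ** U) ** mdiag (\<lambda>j. - \<i> * of_real (\<mu> j))
      = cadj U ** B ** (U ** mdiag (\<lambda>j. - \<i> * of_real (\<mu> j)) ** cadj U) ** U"
    by (simp add: unitary flip: matrix_mul_assoc)
  also have "\<dots> = cadj U ** (B ** A) ** U" by (simp add: A matrix_mul_assoc)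
  also have "\<dots> = mat 1" by (simp add: inverse unitary)
  finally have "\<mu> j \<noteq> 0" for j using mdiag_left_invertible_nonzero by fastforce
  then obtain S T where ST: "S ** T = mat 1" "T ** S = mat 1"
    and TAT: "T ** A ** cadj T = mdiag (\<lambda>j. - \<i> * of_real (sgn (\<mu> j)))"
    and trace_S: "trace (S ** cadj S) = (\<Sum>j\<in>UNIV. of_real \<bar>\<mu> j\<bar>)"
    and trace_A: "trace (A ** cadj A) = (\<Sum>j\<in>UNIV. of_real ((\<mu> j)\<^sup>2))"
    using unitary_diagonal_normal_form[OF unitary] unfolding A by blast
  have "(T ** A ** cadj T) $ a $ a \<in> {\<i>, - \<i>}" for a
    using \<open>\<mu> a \<noteq> 0\<close> by (cases "\<mu> a > 0") (simp_all add: TAT mdiag_def)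
  moreover have "(\<Sum>j\<in>UNIV. \<bar>\<mu> j\<bar>)\<^sup>2 \<le> (\<Sum>j\<in>UNIV. \<bar>\<mu> j\<bar>\<^sup>2) * real CARD('n)"
    by (rule sum_squared_le_sum_of_squares)
  ultimately show ?thesis
    using ST trace_S trace_A
    by (intro exI[of _ S] exI[of _ T]) (simp add: TAT mdiag_def sum_nonneg mult.commute)
qed

lemma iso_IV_normal_form:
  fixes \<alpha> :: "'r::real_algebra_1 \<Rightarrow> ('e::finite \<Rightarrow> complex^'n::finite^'n)"
  assumes iso: "iso_IV dagR \<alpha>" and skew: "dagR b = - b" and inverse: "b' * b = 1"
  shows "\<exists>s t. s * t = 1 \<and> t * s = 1 \<and>
    ((\<forall>l a c. a \<noteq> c \<longrightarrow> \<alpha> (t * b * dagR t) l $ a $ c = 0) \<and>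
     (\<forall>l a. \<alpha> (t * b * dagR t) l $ a $ a \<in> {\<i>, - \<i>})) \<and>
    norm_IV dagR \<alpha> s \<le> (2 * real CARD('n) * real CARD('e)) powr (1/4) * sqrt (norm_IV dagR \<alpha> b)"
proof -
  have bij: "bij \<alpha>" and scale: "\<And>c x. \<alpha> (c *\<^sub>R x) = (\<lambda>l. c *\<^sub>R \<alpha> x l)"
    and mult: "\<And>x y. \<alpha> (x * y) = (\<lambda>l. \<alpha> x l ** \<alpha> y l)"
    and one: "\<alpha> 1 = (\<lambda>l. mat 1)" and adj: "\<And>x. \<alpha> (dagR x) = (\<lambda>l. cadj (\<alpha> x l))"
    using iso unfolding iso_IV_def by blast+
  have skew_factor: "cadj (\<alpha> b l) = - \<alpha> b l" for l
    using adj[of b] scale[of "- 1" b] skew by (metis scaleR_minus1_left)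
  have inverse_factor: "\<alpha> b' l ** \<alpha> b l = mat 1" for l
    using arg_cong[OF inverse, of \<alpha>] mult one by metis
  from bij_hom_factorwise_normal_form[OF bij mult one adj,
      where P = "\<lambda>l X. (\<forall>a c. a \<noteq> c \<longrightarrow> X $ a $ c = 0) \<and> (\<forall>a. X $ a $ a \<in> {\<i>, - \<i>})"
        and Q = "\<lambda>l S. Re (trace (S ** cadj S)) \<ge> 0 \<and>
          (Re (trace (S ** cadj S)))\<^sup>2 \<le> real CARD('n) * Re (trace (\<alpha> b l ** cadj (\<alpha> b l)))",
      OF skew_hermitian_normal_form[OF skew_factor inverse_factor]]
  obtain s t where "s * t = 1" and "t * s = 1"
    and normal: "\<forall>l. (\<forall>a c. a \<noteq> c \<longrightarrow> \<alpha> (t * b * dagR t) l $ a $ c = 0) \<and>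
      (\<forall>a. \<alpha> (t * b * dagR t) l $ a $ a \<in> {\<i>, - \<i>})"
    and norms: "\<forall>l. Re (trace (\<alpha> s l ** cadj (\<alpha> s l))) \<ge> 0 \<and>
      (Re (trace (\<alpha> s l ** cadj (\<alpha> s l))))\<^sup>2
        \<le> real CARD('n) * Re (trace (\<alpha> b l ** cadj (\<alpha> b l)))"
    by blast
  moreover have "norm_IV dagR \<alpha> s
      \<le> (2 * real CARD('n) * real CARD('e)) powr (1/4) * sqrt (norm_IV dagR \<alpha> b)"
    unfolding norm_IV_def Trd_IV_def
    by (simp add: mult adj) (rule sqrt_sum_Cauchy_Schwarz_bound, use norms in auto)
  ultimately show ?thesis
    using normal by (intro exI[of _ s] exI[of _ t]) auto
qed

lemma weakly_unitary_normalization_III: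
  fixes \<iota> :: "'d::division_ring \<Rightarrow> 'r::real_algebra_1"
    and \<alpha> :: "'r \<Rightarrow> ('e::finite \<Rightarrow> quat)"
  assumes DR: "real_scalar_extension \<iota>" and dagR: "real_ext_inv dag \<iota> dagR"
    and V: "left_module sm" and psi: "skew_hermitian dag sm \<psi>" "nondegenerate \<psi>"
    and basis: "is_basis sm m v" "weakly_unitary \<psi> m v"
    and VR: "real_module_extension \<iota> sm smR jV m v"
    and psiR: "real_form_extension \<iota> smR jV \<psi> \<psi>R"
    and iso: "iso_III dagR \<alpha>"
  shows "\<exists>s sinv :: nat \<Rightarrow> 'r. (\<forall>j<m. s j * sinv j = 1 \<and> sinv j * s j = 1) \<and>
    is_basis smR m (\<lambda>j. smR (sinv j) (jV (v j))) \<and>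
    weakly_unitary \<psi>R m (\<lambda>j. smR (sinv j) (jV (v j))) \<and>
    (\<forall>j<m. \<alpha> (\<psi>R (smR (sinv j) (jV (v j))) (smR (sinv j) (jV (v j)))) = (\<lambda>l. q_i)) \<and>
    (\<forall>j<m. norm_III dagR \<alpha> (s j)
      \<le> (2 * 1 * real CARD('e)) powr (1/4) * sqrt (norm_III dagR \<alpha> (\<iota> (\<psi> (v j) (v j)))))"
  by (rule rescale_weakly_unitary_basis[OF DR dagR V psi basis VR psiR,
        where P = "\<lambda>x. \<alpha> x = (\<lambda>l. q_i)"
          and N = "\<lambda>s b. norm_III dagR \<alpha> s
            \<le> (2 * 1 * real CARD('e)) powr (1/4) * sqrt (norm_III dagR \<alpha> b)"])
    (rule iso_III_normal_form[OF iso])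

lemma weakly_unitary_normalization_IV:
  fixes \<iota> :: "'d::division_ring \<Rightarrow> 'r::real_algebra_1"
    and \<alpha> :: "'r \<Rightarrow> ('e::finite \<Rightarrow> complex^'n::finite^'n)"
  assumes DR: "real_scalar_extension \<iota>" and dagR: "real_ext_inv dag \<iota> dagR"
    and V: "left_module sm" and psi: "skew_hermitian dag sm \<psi>" "nondegenerate \<psi>"
    and basis: "is_basis sm m v" "weakly_unitary \<psi> m v"
    and VR: "real_module_extension \<iota> sm smR jV m v"
    and psiR: "real_form_extension \<iota> smR jV \<psi> \<psi>R"
    and iso: "iso_IV dagR \<alpha>"
  shows "\<exists>s sinv :: nat \<Rightarrow> 'r. (\<forall>j<m. s j * sinv j = 1 \<and> sinv j * s j = 1) \<and>
    is_basis smR m (\<lambda>j. smR (sinv j) (jV (v j))) \<and>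
    weakly_unitary \<psi>R m (\<lambda>j. smR (sinv j) (jV (v j))) \<and>
    (\<forall>j<m. \<forall>l a b. a \<noteq> b \<longrightarrow>
      \<alpha> (\<psi>R (smR (sinv j) (jV (v j))) (smR (sinv j) (jV (v j)))) l $ a $ b = 0) \<and>
    (\<forall>j<m. \<forall>l a. \<alpha> (\<psi>R (smR (sinv j) (jV (v j))) (smR (sinv j) (jV (v j)))) l $ a $ a \<in> {\<i>, - \<i>}) \<and>
    (\<forall>j<m. norm_IV dagR \<alpha> (s j)
      \<le> (2 * real CARD('n) * real CARD('e)) powr (1/4) * sqrt (norm_IV dagR \<alpha> (\<iota> (\<psi> (v j) (v j)))))"
proof -
  let ?P = "\<lambda>x. (\<forall>l a b. a \<noteq> b \<longrightarrow> \<alpha> x l $ a $ b = 0) \<and> (\<forall>l a. \<alpha> x l $ a $ a \<in> {\<i>, - \<i>})"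
  let ?N = "\<lambda>s b. norm_IV dagR \<alpha> s
    \<le> (2 * real CARD('n) * real CARD('e)) powr (1/4) * sqrt (norm_IV dagR \<alpha> b)"
  have "\<exists>s sinv :: nat \<Rightarrow> 'r. (\<forall>j<m. s j * sinv j = 1 \<and> sinv j * s j = 1) \<and>
    is_basis smR m (\<lambda>j. smR (sinv j) (jV (v j))) \<and>
    weakly_unitary \<psi>R m (\<lambda>j. smR (sinv j) (jV (v j))) \<and>
    (\<forall>j<m. ?P (\<psi>R (smR (sinv j) (jV (v j))) (smR (sinv j) (jV (v j))))) \<and>
    (\<forall>j<m. ?N (s j) (\<iota> (\<psi> (v j) (v j))))"
    by (rule rescale_weakly_unitary_basis[OF DR dagR V psi basis VR psiR])
      (rule iso_IV_normal_form[OF iso])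
  then show ?thesis by (simp only: imp_conjR all_conj_distrib conj_assoc)
qed

theorem lemma2p17:
  fixes dag :: "'d::{division_ring, ring_char_0} \<Rightarrow> 'd"
    and \<iota> :: "'d \<Rightarrow> 'r::real_algebra_1"
    and dagR :: "'r \<Rightarrow> 'r"
    and sm :: "'d \<Rightarrow> 'v::ab_group_add \<Rightarrow> 'v"
    and \<psi> :: "'v \<Rightarrow> 'v \<Rightarrow> 'd"
    and m :: nat and v :: "nat \<Rightarrow> 'v"
    and smR :: "'r \<Rightarrow> 'w::ab_group_add \<Rightarrow> 'w"
    and jV :: "'v \<Rightarrow> 'w"
    and \<psi>R :: "'w \<Rightarrow> 'w \<Rightarrow> 'r"
    and \<alpha>3 :: "'r \<Rightarrow> ('e3::finite \<Rightarrow> quat)"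
    and \<alpha>4 :: "'r \<Rightarrow> ('e4::finite \<Rightarrow> complex^'n::finite^'n)"
  assumes inv: "involution dag"
    and DR: "real_scalar_extension \<iota>"
    and dagR: "real_ext_inv dag \<iota> dagR"
    and V: "left_module sm"
    and psi: "skew_hermitian dag sm \<psi>" "nondegenerate \<psi>"
    and basis: "is_basis sm m v" "weakly_unitary \<psi> m v"
    and VR: "real_module_extension \<iota> sm smR jV m v"
    and psiR: "real_form_extension \<iota> smR jV \<psi> \<psi>R"
  shows
   "(iso_III dagR \<alpha>3 \<and> (\<forall>x. x \<noteq> 0 \<longrightarrow> Trd_III \<alpha>3 (\<iota> (x * dag x)) > 0) \<longrightarrow>
      (\<exists>s sinv :: nat \<Rightarrow> 'r.
         (\<forall>j<m. s j * sinv j = 1 \<and> sinv j * s j = 1) \<and>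
         is_basis smR m (\<lambda>j. smR (sinv j) (jV (v j))) \<and>
         weakly_unitary \<psi>R m (\<lambda>j. smR (sinv j) (jV (v j))) \<and>
         (\<forall>j<m. \<alpha>3 (\<psi>R (smR (sinv j) (jV (v j))) (smR (sinv j) (jV (v j)))) = (\<lambda>l. q_i)) \<and>
         (\<forall>j<m. norm_III dagR \<alpha>3 (s j)
                 \<le> (2 * 1 * real CARD('e3)) powr (1/4)
                    * sqrt (norm_III dagR \<alpha>3 (\<iota> (\<psi> (v j) (v j)))))))
    \<and>
    (iso_IV dagR \<alpha>4 \<and> (\<forall>x. x \<noteq> 0 \<longrightarrow> Trd_IV \<alpha>4 (\<iota> (x * dag x)) > 0) \<longrightarrow>
      (\<exists>s sinv :: nat \<Rightarrow> 'r.
         (\<forall>j<m. s j * sinv j = 1 \<and> sinv j * s j = 1) \<and>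
         is_basis smR m (\<lambda>j. smR (sinv j) (jV (v j))) \<and>
         weakly_unitary \<psi>R m (\<lambda>j. smR (sinv j) (jV (v j))) \<and>
         (\<forall>j<m. \<forall>l a b. a \<noteq> b \<longrightarrow>
             \<alpha>4 (\<psi>R (smR (sinv j) (jV (v j))) (smR (sinv j) (jV (v j)))) l $ a $ b = 0) \<and>
         (\<forall>j<m. \<forall>l a.
             \<alpha>4 (\<psi>R (smR (sinv j) (jV (v j))) (smR (sinv j) (jV (v j)))) l $ a $ a \<in> {\<i>, - \<i>}) \<and>
         (\<forall>j<m. norm_IV dagR \<alpha>4 (s j)
                 \<le> (2 * real CARD('n) * real CARD('e4)) powr (1/4)
                    * sqrt (norm_IV dagR \<alpha>4 (\<iota> (\<psi> (v j) (v j)))))))"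
  by (intro conjI impI; elim conjE)
    (erule weakly_unitary_normalization_III[OF DR dagR V psi basis VR psiR],
     erule weakly_unitary_normalization_IV[OF DR dagR V psi basis VR psiR])

end
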